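(* Let $k\ge 4$ be an integer, let $t$ be a positive integer divisible by $\operatorname{lcm}(2,3,\ldots,2k-1)$, and let $n$ be an integer with $k^2-k \le n \le 4k^2-10k+5$. Suppose $S$ is a $k$-bounded zero-sum sequence of length $|S|=t+n$ that is $t$-avoiding, and let $\alpha>0$, $\beta>0$ be integers with $v_\alpha(S)\ge \frac{k}{k+1}n$ and $v_{-\beta}(S)\ge\frac{k}{k+1}n$. Let $g=\gcd(\alpha,\beta)$ and let $X$ be the sequence consisting of $\beta/g$ copies of $\alpha$ and $\alpha/g$ copies of $-\beta$. Then for every $N\in\mathbb N$, the sequence $S'$ obtained by adjoining $N$ copies of $X$ to $S$ (i.e. $S\cdot X^{[N]}$) has no zero-sum subsequence of length exactly $n$.
   Context: A sequence is a finite multiset of integers; $|S|$ is its length counted with multiplicity, $v_a(S)$ is the multiplicity of $a$ in $S$, and a subsequence is a sub-multiset. $S$ is zero-sum if the sum of its terms is $0$, and $k$-bounded if all terms lie in $[-k,k]$. A zero-sum sequence is $t$-avoiding if it has no zero-sum subsequence of length exactly $t$. $S\cdot X^{[N]}$ denotes the concatenation (multiset union) of $S$ with $N$ copies of $X$. *)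

theory Defs
  imports Main "HOL-Library.Multiset"
begin

text \<open>Sequences are finite multisets of integers.\<close>

definition zero_sum :: "int multiset \<Rightarrow> bool" where
  "zero_sum S \<longleftrightarrow> sum_mset S = 0"

definition k_bounded :: "int \<Rightarrow> int multiset \<Rightarrow> bool" where
  "k_bounded k S \<longleftrightarrow> (\<forall>a \<in># S. -k \<le> a \<and> a \<le> k)"

definition t_avoiding :: "nat \<Rightarrow> int multiset \<Rightarrow> bool" where
  "t_avoiding t S \<longleftrightarrow> zero_sum S \<and> \<not> (\<exists>T. T \<subseteq># S \<and> size T = t \<and> zero_sum T)"

end

theory Submission
  imports Defs
begin

text \<open>A zero-sum subsequence \<open>T\<close> of length \<open>n\<close> of \<open>S + N\<cdot>X\<close> cannot use more copies of \<open>\<alpha>\<close>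
  than \<open>S\<close> contains: with at least \<open>kn/(k+1)\<close> of them the remaining at most \<open>n/(k+1)\<close> terms,
  each \<open>\<ge> -k\<close>, cannot cancel them. Symmetrically for \<open>-\<beta>\<close>, and since \<open>X\<close> consists only of
  \<open>\<alpha>\<close> and \<open>-\<beta>\<close>, \<open>T\<close> is already a subsequence of \<open>S\<close>. Its complement in \<open>S\<close> is then a
  zero-sum subsequence of length \<open>t\<close>, contradicting that \<open>S\<close> is \<open>t\<close>-avoiding.\<close>

lemma sum_mset_ge_neg_bound:
  fixes A :: "int multiset"
  assumes "\<forall>x\<in>#A. -K \<le> x"
  shows "-K * int (size A) \<le> sum_mset A"
  using assms by (induction A) (auto simp: algebra_simps)

lemma sum_mset_split_count:
  fixes T :: "int multiset"
  shows "sum_mset T = int (count T a) * a + sum_mset {#x \<in># T. x \<noteq> a#}"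
    and "size {#x \<in># T. x \<noteq> a#} = size T - count T a"
proof -
  have T_split: "T = replicate_mset (count T a) a + {#x \<in># T. x \<noteq> a#}"
    using multiset_partition[of T "\<lambda>x. x = a"] by (simp add: filter_eq_replicate_mset)
  show "sum_mset T = int (count T a) * a + sum_mset {#x \<in># T. x \<noteq> a#}"
    by (subst T_split) simp
  show "size {#x \<in># T. x \<noteq> a#} = size T - count T a"
    by (subst (2) T_split) simp
qed

lemma count_pos_le_of_sum_nonpos:
  fixes T :: "int multiset" and k :: nat
  assumes lower: "\<forall>x\<in>#T. - int k \<le> x" and "sum_mset T \<le> 0" and "a \<ge> 1"
  shows "(k + 1) * count T a \<le> k * size T"
proof -
  let ?c = "count T a" and ?R = "{#x \<in># T. x \<noteq> a#}"
  have "?c \<le> size T"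
    by (metis count_le_replicate_mset_subset_eq order_refl size_mset_mono size_replicate_mset)
  have "- int k * int (size ?R) \<le> sum_mset ?R"
    using lower by (intro sum_mset_ge_neg_bound) auto
  moreover have "int ?c \<le> int ?c * a"
    using \<open>a \<ge> 1\<close> mult_left_mono[of 1 a "int ?c"] by simp
  ultimately have "int ?c - int k * (int (size T) - int ?c) \<le> 0"
    using sum_mset_split_count[where T = T and a = a] \<open>sum_mset T \<le> 0\<close> \<open>?c \<le> size T\<close> by (simp add: of_nat_diff)
  then have "int ((k + 1) * ?c) \<le> int (k * size T)"
    by (simp add: algebra_simps)
  then show ?thesis by linarith
qed

lemma count_neg_le_of_sum_nonneg:
  fixes T :: "int multiset" and k :: nat
  assumes "\<forall>x\<in>#T. x \<le> int k" and "sum_mset T \<ge> 0" and "b \<ge> 1"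
  shows "(k + 1) * count T (-b) \<le> k * size T"
proof -
  have count_neg: "count (image_mset uminus T) b = count T (-b)"
    and sum_neg: "sum_mset (image_mset uminus T) = - sum_mset T"
    by (induction T) auto
  have "(k + 1) * count (image_mset uminus T) b \<le> k * size (image_mset uminus T)"
    using assms sum_neg by (intro count_pos_le_of_sum_nonpos) auto
  with count_neg show ?thesis by simp
qed

lemma count_le_of_zero_sum_k_bounded:
  fixes T S :: "int multiset" and k :: nat
  assumes "k_bounded (int k) T" and "zero_sum T" and "a \<noteq> 0"
    and "k * size T \<le> (k + 1) * count S a"
  shows "count T a \<le> count S a"
proof -
  have "(k + 1) * count T a \<le> k * size T"
  proof (cases "a > 0")
    case True
    then show ?thesis
      using assms(1,2) by (intro count_pos_le_of_sum_nonpos) (auto simp: k_bounded_def zero_sum_def)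
  next
    case False
    then have "(k + 1) * count T (- (- a)) \<le> k * size T"
      using assms(1-3) by (intro count_neg_le_of_sum_nonneg) (auto simp: k_bounded_def zero_sum_def)
    then show ?thesis by simp
  qed
  with assms(4) have "(k + 1) * count T a \<le> (k + 1) * count S a"
    by linarith
  then show ?thesis
    by (metis mult_left_le_imp_le add_gr_0 zero_less_one)
qed

lemma subseteq_of_count_le_on_added:
  assumes "T \<subseteq># S + M" and "\<forall>x\<in>#M. count T x \<le> count S x"
  shows "T \<subseteq># S"
  unfolding subseteq_mset_def
proof
  fix x
  show "count T x \<le> count S x"
  proof (cases "x \<in># M")
    case False
    then show ?thesis
      using assms(1) by (metis add.right_neutral count_eq_zero_iff count_union subseteq_mset_def)
  qed (use assms(2) in blast)
qed

lemma t_avoiding_complement_not_zero_sum: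
  assumes "t_avoiding t S" and "T \<subseteq># S" and "size S = t + size T"
  shows "\<not> zero_sum T"
proof
  assume "zero_sum T"
  have "S = T + (S - T)"
    using \<open>T \<subseteq># S\<close> by simp
  then have "sum_mset S = sum_mset T + sum_mset (S - T)"
    by (metis sum_mset.union)
  then have "zero_sum (S - T)"
    using \<open>zero_sum T\<close> \<open>t_avoiding t S\<close> by (simp add: zero_sum_def t_avoiding_def)
  moreover have "size (S - T) = t"
    using assms(2,3) by (simp add: size_Diff_submset)
  moreover have "S - T \<subseteq># S"
    by simp
  ultimately show False
    using \<open>t_avoiding t S\<close> unfolding t_avoiding_def by blast
qed

lemma set_mset_repeat_replicate_pair:
  "set_mset (repeat_mset N (replicate_mset i a + replicate_mset j b)) \<subseteq> {a, b}"
  by (induction N) (auto split: if_splits)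

theorem lemma2p3:
  fixes k t n :: nat and S :: "int multiset" and \<alpha> \<beta> :: int
  assumes "k \<ge> 4"
    and "t > 0" and "Lcm {2..2*k-1} dvd t"
    and "k^2 - k \<le> n" and "n \<le> 4*k^2 - 10*k + 5"
    and "k_bounded (int k) S" and "zero_sum S" and "size S = t + n"
    and "t_avoiding t S"
    and "\<alpha> > 0" and "\<beta> > 0"
    and "(k+1) * count S \<alpha> \<ge> k * n"
    and "(k+1) * count S (-\<beta>) \<ge> k * n"
  shows "\<forall>N::nat. \<not> (\<exists>T. T \<subseteq>#
           S + repeat_mset N (replicate_mset (nat (\<beta> div gcd \<alpha> \<beta>)) \<alpha>
                              + replicate_mset (nat (\<alpha> div gcd \<alpha> \<beta>)) (-\<beta>))
           \<and> size T = n \<and> zero_sum T)"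
proof (intro allI notI)
  fix N
  let ?X = "replicate_mset (nat (\<beta> div gcd \<alpha> \<beta>)) \<alpha> + replicate_mset (nat (\<alpha> div gcd \<alpha> \<beta>)) (-\<beta>)"
  assume "\<exists>T. T \<subseteq># S + repeat_mset N ?X \<and> size T = n \<and> zero_sum T"
  then obtain T where T: "T \<subseteq># S + repeat_mset N ?X" "size T = n" "zero_sum T"
    by blast
  have X_values: "set_mset (repeat_mset N ?X) \<subseteq> {\<alpha>, -\<beta>}"
    by (rule set_mset_repeat_replicate_pair)
  have "4 * k \<le> k^2"
    using \<open>k \<ge> 4\<close> by (simp add: power2_eq_square)
  then have "0 < k * n"
    using \<open>k \<ge> 4\<close> \<open>k^2 - k \<le> n\<close> by simp
  then have "\<alpha> \<in># S" "-\<beta> \<in># S"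
    using assms(12,13) by (metis count_eq_zero_iff mult_0_right not_le)+
  then have "k_bounded (int k) (S + repeat_mset N ?X)"
    using \<open>k_bounded (int k) S\<close> X_values unfolding k_bounded_def by fastforce
  then have "k_bounded (int k) T"
    using T(1) unfolding k_bounded_def by (meson mset_subset_eqD)
  then have "count T \<alpha> \<le> count S \<alpha>" "count T (-\<beta>) \<le> count S (-\<beta>)"
    using T(2,3) assms(10-13) count_le_of_zero_sum_k_bounded[of k T] by simp_all
  then have "\<forall>x\<in>#repeat_mset N ?X. count T x \<le> count S x"
    using X_values by blast
  with T(1) have "T \<subseteq># S"
    by (rule subseteq_of_count_le_on_added)
  then show False
    using t_avoiding_complement_not_zero_sum T assms(8,9) by blast
qed

end
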